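(* Let $\mathfrak{S}=(\mathcal{X},\mathsf{S},\gamma,(\Lambda_{a})_{a\in\mathcal{A}})$ be a spectral decomposition system for the Euclidean space $\mathfrak{H}$ and let $\Phi\colon\mathfrak{H}\to[-\infty,+\infty]$. Then the following are equivalent: (i) for all $X,Y\in\mathfrak{H}$, $\gamma(X)=\gamma(Y)$ implies $\Phi(X)=\Phi(Y)$; (ii) $\Phi\circ\Lambda_a=\Phi\circ\Lambda_b$ for all $a,b\in\mathcal{A}$; (iii) there exists an $\mathsf{S}$-invariant function $\varphi\colon\mathcal{X}\to[-\infty,+\infty]$ such that $\Phi=\varphi\circ\gamma$. Moreover, if (iii) holds, then $\varphi=\Phi\circ\Lambda_a$ for every $a\in\mathcal{A}$.
   Context: A Euclidean space is a finite-dimensional real inner product space; inner products are written $\langle\cdot,\cdot\rangle$ and norms $\|\cdot\|$. Let $\mathfrak{H}$ and $\mathcal{X}$ be Euclidean spaces, let $\mathsf{S}$ be a group acting on $\mathcal{X}$ by linear isometries, let $\gamma\colon\mathfrak{H}\to\mathcal{X}$, and let $(\Lambda_a)_{a\in\mathcal{A}}$ be a family of linear operators from $\mathcal{X}$ to $\mathfrak{H}$. The orbit of $x$ is $\mathsf{S}\cdot x=\{s\cdot x: s\in\mathsf{S}\}$; a map $f$ on $\mathcal{X}$ is $\mathsf{S}$-invariant if $f(s\cdot x)=f(x)$ for all $s,x$. The tuple is a spectral decomposition system for $\mathfrak{H}$ if: [A] every $\Lambda_a$ is an isometry; [B] there exists an $\mathsf{S}$-invariant $\tau\colon\mathcal{X}\to\mathcal{X}$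 with $\tau(x)\in\mathsf{S}\cdot x$ for all $x$ and $\gamma\circ\Lambda_a=\tau$ for all $a$; [C] for every $X\in\mathfrak{H}$ there is $a$ with $X=\Lambda_a\gamma(X)$; [D] $\langle X,Y\rangle\leq\langle\gamma(X),\gamma(Y)\rangle$ for all $X,Y\in\mathfrak{H}$. *)

theory Defs
  imports "HOL-Analysis.Analysis" "HOL-Algebra.Group" "HOL-Library.Extended_Real"
begin

definition isometric_group_action :: "('s, 'm) monoid_scheme \<Rightarrow> ('s \<Rightarrow> 'x::euclidean_space \<Rightarrow> 'x) \<Rightarrow> bool" where
  "isometric_group_action G act \<longleftrightarrow>
     group G \<and>
     act \<one>\<^bsub>G\<^esub> = id \<and>
     (\<forall>s\<in>carrier G. \<forall>t\<in>carrier G. act (s \<otimes>\<^bsub>G\<^esub> t) = act s \<circ> act t) \<and>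
     (\<forall>s\<in>carrier G. linear (act s) \<and> (\<forall>x. norm (act s x) = norm x))"

definition orbit :: "('s, 'm) monoid_scheme \<Rightarrow> ('s \<Rightarrow> 'x \<Rightarrow> 'x) \<Rightarrow> 'x \<Rightarrow> 'x set" where
  "orbit G act x = {act s x | s. s \<in> carrier G}"

definition S_invariant :: "('s, 'm) monoid_scheme \<Rightarrow> ('s \<Rightarrow> 'x \<Rightarrow> 'x) \<Rightarrow> ('x \<Rightarrow> 'b) \<Rightarrow> bool" where
  "S_invariant G act f \<longleftrightarrow> (\<forall>s\<in>carrier G. \<forall>x. f (act s x) = f x)"

definition linear_isometry :: "('x::euclidean_space \<Rightarrow> 'h::euclidean_space) \<Rightarrow> bool" where
  "linear_isometry L \<longleftrightarrow> linear L \<and> (\<forall>x. norm (L x) = norm x)"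

definition spectral_decomposition_system ::
  "('s, 'm) monoid_scheme \<Rightarrow> ('s \<Rightarrow> 'x::euclidean_space \<Rightarrow> 'x) \<Rightarrow> ('h::euclidean_space \<Rightarrow> 'x)
    \<Rightarrow> 'a set \<Rightarrow> ('a \<Rightarrow> 'x \<Rightarrow> 'h) \<Rightarrow> bool" where
  "spectral_decomposition_system G act \<gamma> A \<Lambda> \<longleftrightarrow>
     isometric_group_action G act \<and>
     (\<forall>a\<in>A. linear_isometry (\<Lambda> a)) \<and>
     (\<exists>\<tau>. S_invariant G act \<tau> \<and> (\<forall>x. \<tau> x \<in> orbit G act x) \<and> (\<forall>a\<in>A. \<gamma> \<circ> \<Lambda> a = \<tau>)) \<and>
     (\<forall>X. \<exists>a\<in>A. X = \<Lambda> a (\<gamma> X)) \<and>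
     (\<forall>X Y. inner X Y \<le> inner (\<gamma> X) (\<gamma> Y))"

end

theory Submission
  imports Defs
begin

text \<open>Only axioms [B] and [C] matter. By [B], \<open>\<gamma> \<circ> \<Lambda>\<^sub>a = \<tau>\<close> does not depend on \<open>a\<close>, and by [C]
  every \<open>X\<close> is some \<open>\<Lambda>\<^sub>a (\<gamma> X)\<close>; hence \<open>\<gamma> X = \<tau> (\<gamma> X)\<close>, so \<open>\<Lambda>\<^sub>a\<close> is a section of \<open>\<gamma>\<close> on the
  range of \<open>\<gamma>\<close>. A function constant on the fibres of \<open>\<gamma>\<close> therefore factors through \<open>\<Phi> \<circ> \<Lambda>\<^sub>a\<close>,
  which is \<open>S\<close>-invariant because \<open>\<tau>\<close> is; conversely an invariant \<open>\<phi>\<close> takes the same value at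
  \<open>x\<close> and at \<open>\<tau> x \<in> S \<cdot> x\<close>, which pins it down as \<open>\<Phi> \<circ> \<Lambda>\<^sub>a\<close>.\<close>

context
  fixes G :: "('s, 'm) monoid_scheme"
    and act :: "'s \<Rightarrow> 'x::euclidean_space \<Rightarrow> 'x"
    and \<gamma> :: "'h::euclidean_space \<Rightarrow> 'x"
    and A :: "'a set"
    and \<Lambda> :: "'a \<Rightarrow> 'x \<Rightarrow> 'h"
  assumes sds: "spectral_decomposition_system G act \<gamma> A \<Lambda>"
begin

lemma sds_Lambda_gamma: "\<exists>a\<in>A. X = \<Lambda> a (\<gamma> X)"
  using sds unfolding spectral_decomposition_system_def by blast

lemma sds_index_set_nonempty: "A \<noteq> {}"
  using sds_Lambda_gamma by blast

lemma sds_obtain_tau: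
  obtains \<tau> where "S_invariant G act \<tau>" "\<And>x. \<tau> x \<in> orbit G act x"
    "\<And>a x. a \<in> A \<Longrightarrow> \<gamma> (\<Lambda> a x) = \<tau> x"
  using sds unfolding spectral_decomposition_system_def by (metis comp_apply)

lemma sds_gamma_Lambda_independent:
  assumes "a \<in> A" "b \<in> A"
  shows "\<gamma> (\<Lambda> a x) = \<gamma> (\<Lambda> b x)"
  by (rule sds_obtain_tau) (simp add: assms)

lemma sds_gamma_Lambda_act:
  assumes "a \<in> A" "s \<in> carrier G"
  shows "\<gamma> (\<Lambda> a (act s x)) = \<gamma> (\<Lambda> a x)"
  by (rule sds_obtain_tau) (simp add: assms S_invariant_def)

lemma sds_gamma_Lambda_in_orbit:
  assumes "a \<in> A"
  shows "\<gamma> (\<Lambda> a x) \<in> orbit G act x"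
  by (rule sds_obtain_tau) (simp add: assms)

lemma sds_gamma_Lambda_gamma:
  assumes "a \<in> A"
  shows "\<gamma> (\<Lambda> a (\<gamma> X)) = \<gamma> X"
proof -
  obtain b where "b \<in> A" and "X = \<Lambda> b (\<gamma> X)"
    using sds_Lambda_gamma by blast
  then have "\<gamma> X = \<gamma> (\<Lambda> b (\<gamma> X))" by simp
  also have "\<dots> = \<gamma> (\<Lambda> a (\<gamma> X))"
    using \<open>b \<in> A\<close> assms by (rule sds_gamma_Lambda_independent)
  finally show ?thesis by simp
qed

lemma sds_fibrewise_iff_Lambda_independent:
  fixes \<Phi> :: "'h \<Rightarrow> 'b"
  shows "(\<forall>X Y. \<gamma> X = \<gamma> Y \<longrightarrow> \<Phi> X = \<Phi> Y) \<longleftrightarrow> (\<forall>a\<in>A. \<forall>b\<in>A. \<Phi> \<circ> \<Lambda> a = \<Phi> \<circ> \<Lambda> b)"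
proof
  assume fibrewise: "\<forall>X Y. \<gamma> X = \<gamma> Y \<longrightarrow> \<Phi> X = \<Phi> Y"
  show "\<forall>a\<in>A. \<forall>b\<in>A. \<Phi> \<circ> \<Lambda> a = \<Phi> \<circ> \<Lambda> b"
  proof (intro ballI ext)
    fix a b x
    assume "a \<in> A" "b \<in> A"
    then show "(\<Phi> \<circ> \<Lambda> a) x = (\<Phi> \<circ> \<Lambda> b) x"
      unfolding comp_apply using fibrewise sds_gamma_Lambda_independent by blast
  qed
next
  assume indep: "\<forall>a\<in>A. \<forall>b\<in>A. \<Phi> \<circ> \<Lambda> a = \<Phi> \<circ> \<Lambda> b"
  show "\<forall>X Y. \<gamma> X = \<gamma> Y \<longrightarrow> \<Phi> X = \<Phi> Y"
  proof (intro allI impI)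
    fix X Y
    assume eq: "\<gamma> X = \<gamma> Y"
    obtain a where "a \<in> A" and X: "X = \<Lambda> a (\<gamma> X)" using sds_Lambda_gamma by blast
    obtain b where "b \<in> A" and Y: "Y = \<Lambda> b (\<gamma> Y)" using sds_Lambda_gamma by blast
    have "\<Phi> X = (\<Phi> \<circ> \<Lambda> a) (\<gamma> X)" using X by simp
    also have "\<dots> = (\<Phi> \<circ> \<Lambda> b) (\<gamma> Y)" using indep \<open>a \<in> A\<close> \<open>b \<in> A\<close> eq by metis
    also have "\<dots> = \<Phi> Y" using Y by simp
    finally show "\<Phi> X = \<Phi> Y" .
  qed
qed

lemma sds_fibrewise_factors_through_Lambda:
  fixes \<Phi> :: "'h \<Rightarrow> 'b"
  assumes fibrewise: "\<And>X Y. \<gamma> X = \<gamma> Y \<Longrightarrow> \<Phi> X = \<Phi> Y" and "a \<in> A"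
  shows "S_invariant G act (\<Phi> \<circ> \<Lambda> a)" and "\<Phi> = (\<Phi> \<circ> \<Lambda> a) \<circ> \<gamma>"
proof -
  show "S_invariant G act (\<Phi> \<circ> \<Lambda> a)"
    unfolding S_invariant_def comp_apply
    by (intro ballI allI fibrewise sds_gamma_Lambda_act \<open>a \<in> A\<close>)
  show "\<Phi> = (\<Phi> \<circ> \<Lambda> a) \<circ> \<gamma>"
    unfolding fun_eq_iff comp_apply
    by (intro allI fibrewise sds_gamma_Lambda_gamma[symmetric] \<open>a \<in> A\<close>)
qed

lemma sds_invariant_factor_unique:
  fixes \<phi> :: "'x \<Rightarrow> 'b"
  assumes "S_invariant G act \<phi>" and "a \<in> A"
  shows "\<phi> = (\<phi> \<circ> \<gamma>) \<circ> \<Lambda> a"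
proof
  fix x
  obtain s where "s \<in> carrier G" and s: "\<gamma> (\<Lambda> a x) = act s x"
    using sds_gamma_Lambda_in_orbit[OF \<open>a \<in> A\<close>] unfolding orbit_def by blast
  then show "\<phi> x = ((\<phi> \<circ> \<gamma>) \<circ> \<Lambda> a) x"
    using assms(1) unfolding S_invariant_def by simp
qed

end

theorem proposition4p1:
  fixes G :: "('s, 'm) monoid_scheme"
    and act :: "'s \<Rightarrow> 'x::euclidean_space \<Rightarrow> 'x"
    and \<gamma> :: "'h::euclidean_space \<Rightarrow> 'x"
    and A :: "'a set"
    and \<Lambda> :: "'a \<Rightarrow> 'x \<Rightarrow> 'h"
    and \<Phi> :: "'h \<Rightarrow> ereal"
  assumes "spectral_decomposition_system G act \<gamma> A \<Lambda>"
  shows "((\<forall>X Y. \<gamma> X = \<gamma> Y \<longrightarrow> \<Phi> X = \<Phi> Y) \<longleftrightarrow>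
            (\<forall>a\<in>A. \<forall>b\<in>A. \<Phi> \<circ> \<Lambda> a = \<Phi> \<circ> \<Lambda> b))
       \<and> ((\<forall>a\<in>A. \<forall>b\<in>A. \<Phi> \<circ> \<Lambda> a = \<Phi> \<circ> \<Lambda> b) \<longleftrightarrow>
            (\<exists>\<phi> :: 'x \<Rightarrow> ereal. S_invariant G act \<phi> \<and> \<Phi> = \<phi> \<circ> \<gamma>))
       \<and> (\<forall>\<phi> :: 'x \<Rightarrow> ereal. S_invariant G act \<phi> \<and> \<Phi> = \<phi> \<circ> \<gamma> \<longrightarrow>
            (\<forall>a\<in>A. \<phi> = \<Phi> \<circ> \<Lambda> a))"
proof -
  note i_iff_ii = sds_fibrewise_iff_Lambda_independent[OF assms, of \<Phi>]
  have ii_imp_iii: "\<exists>\<phi> :: 'x \<Rightarrow> ereal. S_invariant G act \<phi> \<and> \<Phi> = \<phi> \<circ> \<gamma>"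
    if "\<forall>a\<in>A. \<forall>b\<in>A. \<Phi> \<circ> \<Lambda> a = \<Phi> \<circ> \<Lambda> b"
  proof -
    obtain a where a: "a \<in> A" using sds_index_set_nonempty[OF assms] by blast
    have "\<And>X Y. \<gamma> X = \<gamma> Y \<Longrightarrow> \<Phi> X = \<Phi> Y" using i_iff_ii that by blast
    with sds_fibrewise_factors_through_Lambda[OF assms _ a] show ?thesis by blast
  qed
  have iii_imp_i: "\<forall>X Y. \<gamma> X = \<gamma> Y \<longrightarrow> \<Phi> X = \<Phi> Y"
    if "\<exists>\<phi> :: 'x \<Rightarrow> ereal. S_invariant G act \<phi> \<and> \<Phi> = \<phi> \<circ> \<gamma>"
    using that by auto
  have factor_unique: "\<phi> = \<Phi> \<circ> \<Lambda> a"
    if "S_invariant G act \<phi>" "\<Phi> = \<phi> \<circ> \<gamma>" "a \<in> A" for \<phi> :: "'x \<Rightarrow> ereal" and a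
    using sds_invariant_factor_unique[OF assms that(1,3)] that(2) by simp
  show ?thesis
    using i_iff_ii ii_imp_iii iii_imp_i factor_unique by blast
qed

end
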